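(* Let $L\subset\mathbb{R}^{n+1}$ be an $(n+1)$-dimensional lattice with $|q|^2\in\mathbb{N}_0$ for all $q\in L$. The theta series $\Theta_L(x,w)$ satisfies the differential equation $$\big[\Delta_w-4\pi\omega\,\partial_s\big]\Theta_L(x,w)=0,$$ where $\Delta_w=\sum_{i=0}^n\frac{\partial^2}{\partial w_i^2}$ and $\partial_s$ is the slice derivative with respect to $x$.
   Context: $\mathbb{R}_n$ is the real Clifford algebra generated by $e_1,\dots,e_n$, $e_0=1$; paravectors $x=x_0+\underline{x}$ identified with $\mathbb{R}^{n+1}$; for $x\in H=\mathbb{R}^{n+1}\setminus\mathbb{R}$, $\omega=\underline{x}/\|\underline{x}\|\in\mathbb{S}^{n-1}$ ($\omega^2=-1$), $\mathbb{C}_\omega=\{u+\omega v\}$, and $w=\sum_{i=0}^ne_iw_i$ with $w_i\in\mathbb{C}_\omega$; $\langle q,w\rangle=\sum_iq_iw_i$. Lattice $L=\{\sum m_i\mathfrak{Q}_i: m_i\in\mathbb{Z}\}$. Slice monogenic functions $f(u+\omega v)=\alpha+\omega\beta$ with $(\alpha,\beta)$ satisfying the Cauchy–Riemann system; $*$-product $(\alpha+\omega\beta)*(\gamma+\omega\delta)=(\alpha\gamma-\beta\delta)+\omega(\beta\gamma+\alpha\delta)$; $\exp_*(f)=\sum_kf^{*k}/k!$. The slice derivative of $f=\alpha+\omega\beta$ is $\partial_sf(u+\omega v)=\partial_u\alpha(u,v)+\omega\partial_u\beta(u,v)$. $\Theta_L(x,w)=\sum_{q\in L}\exp_*\big((\pi|q|^2x+2\pi\langle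 q,w\rangle)\omega\big)$; the derivatives $\partial/\partial w_i$ are the complex derivatives in $w_i\in\mathbb{C}_\omega$. *)

theory Defs
  imports "HOL-Analysis.Analysis"
begin

text \<open>The ambient space R^{n+1} is modelled as real^'n for a finite index
type 'n (its n+1 coordinates indexed by 'n). On a fixed slice C_omega we identify
C_omega with the complex numbers via u + omega v |-> u + i v (omega |-> i); the
*-product of slice functions is then complex multiplication and exp_* is exp.
A point x = u + omega v of H has v = |x_vec| > 0.\<close>

definition lattice :: "('n::finite \<Rightarrow> real^'n) \<Rightarrow> (real^'n) set" where
  "lattice Q = {(\<Sum>i\<in>UNIV. real_of_int (m i) *\<^sub>R Q i) | m. True}"

definition pairing :: "real^'n::finite \<Rightarrow> complex^'n \<Rightarrow> complex" where
  "pairing q w = (\<Sum>i\<in>UNIV. complex_of_real (q $ i) * w $ i)"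

definition theta :: "(real^'n::finite) set \<Rightarrow> real \<Rightarrow> real \<Rightarrow> complex^'n \<Rightarrow> complex" where
  "theta L u v w = (\<Sum>\<^sub>\<infinity>q\<in>L.
     exp ((complex_of_real pi * complex_of_real ((norm q)\<^sup>2) * Complex u v
           + 2 * complex_of_real pi * pairing q w) * \<i>))"

text \<open>Slice derivative: d_s f (u + omega v) = d_u alpha + omega d_u beta, i.e. the
partial derivative in u of the C_omega-valued function.\<close>
definition slice_deriv :: "(real \<Rightarrow> real \<Rightarrow> complex) \<Rightarrow> real \<Rightarrow> real \<Rightarrow> complex" where
  "slice_deriv F u v = vector_derivative (\<lambda>t. F t v) (at u)"

definition partial_w :: "'n::finite \<Rightarrow> (complex^'n \<Rightarrow> complex) \<Rightarrow> complex^'n \<Rightarrow> complex" where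
  "partial_w i G w = deriv (\<lambda>\<zeta>. G (\<chi> j. if j = i then \<zeta> else w $ j)) (w $ i)"

definition laplace_w :: "(complex^'n::finite \<Rightarrow> complex) \<Rightarrow> complex^'n \<Rightarrow> complex" where
  "laplace_w G w = (\<Sum>i\<in>UNIV. partial_w i (partial_w i G) w)"

end

theory Submission
  imports Defs "HOL-Complex_Analysis.Cauchy_Integral_Formula"
begin

(* Each summand e = exp ((pi |q|^2 z + 2 pi <q,w>) i) of the theta series satisfies
   d^2 e / d w_i^2 = (2 pi i q_i)^2 e and d e / d z = pi i |q|^2 e, and the sum over i of
   (2 pi i q_i)^2 is 4 pi i (pi i |q|^2): the equation holds termwise.  Termwise
   differentiation is justified by Weierstrass' theorem on locally uniform limits of
   holomorphic functions: for Im z > 0 the summands, also after multiplication by a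
   polynomial in q, are dominated locally uniformly by (1 + |q|)^k exp (- a |q|^2 + b |q|),
   which is O(exp (- |q|)); and exp (- |q|) is summable over a lattice because the lattice
   is the image of Z^n under an injective linear map, reducing it to a product of geometric
   series. *)

lemma summable_on_exp_neg_abs_int:
  fixes a :: real
  assumes "a > 0"
  shows "(\<lambda>j::int. exp (- a * \<bar>of_int j\<bar>)) summable_on UNIV"
proof -
  have geometric: "(\<lambda>n::nat. exp (- a * real n)) summable_on UNIV"
    using summable_geometric[of "exp (- a)"] assms
    by (simp add: summable_on_UNIV_nonneg_real_iff exp_of_nat_mult[symmetric] mult.commute)
  have "(\<lambda>j::int. exp (- a * \<bar>of_int j\<bar>)) summable_on range int"
    by (subst summable_on_reindex) (use geometric in \<open>auto simp: o_def\<close>)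
  moreover have "(\<lambda>j::int. exp (- a * \<bar>of_int j\<bar>)) summable_on range (\<lambda>n. - int n)"
    by (subst summable_on_reindex) (use geometric in \<open>auto simp: o_def inj_on_def\<close>)
  moreover have "range int \<union> range (\<lambda>n. - int n) = UNIV"
    by (auto intro: int_cases2)
  ultimately show ?thesis
    by (metis summable_on_union)
qed

lemma summable_on_exp_neg_l1_int_vectors:
  fixes c :: real
  assumes "c > 0"
  shows "(\<lambda>m::'n::finite \<Rightarrow> int. exp (- c * (\<Sum>i\<in>UNIV. \<bar>of_int (m i)\<bar>))) summable_on UNIV"
proof -
  have "Infinite_Set_Sum.abs_summable_on (\<lambda>m. \<Prod>i\<in>UNIV. exp (- c * \<bar>of_int (m i)\<bar>))
          (PiE UNIV (\<lambda>_::'n. UNIV))"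
    using summable_on_exp_neg_abs_int[OF assms]
    by (intro abs_summable_on_prod_PiE) (simp_all add: abs_summable_equivalent[symmetric])
  then have "(\<lambda>m::'n \<Rightarrow> int. \<Prod>i\<in>UNIV. exp (- c * \<bar>of_int (m i)\<bar>)) summable_on UNIV"
    by (simp add: abs_summable_equivalent[symmetric] PiE_UNIV_domain abs_summable_summable)
  then show ?thesis
    by (simp add: exp_sum[symmetric] sum_distrib_left)
qed

lemma linear_sum_component_scaleR: "linear (\<lambda>x::real^'n::finite. \<Sum>i\<in>UNIV. x $ i *\<^sub>R Q i)"
  by (intro linearI) (simp_all add: scaleR_add_left sum.distrib scaleR_sum_right)

lemma inj_lincomb_of_independent:
  fixes Q :: "'n::finite \<Rightarrow> 'a::real_vector"
  assumes inj: "inj Q" and indep: "independent (range Q)"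
  shows "inj (\<lambda>x::real^'n. \<Sum>i\<in>UNIV. x $ i *\<^sub>R Q i)"
proof -
  have "x = 0" if "(\<Sum>i\<in>UNIV. x $ i *\<^sub>R Q i) = 0" for x :: "real^'n"
  proof -
    have "(\<Sum>v\<in>range Q. x $ inv Q v *\<^sub>R v) = 0"
      using that inj by (simp add: sum.reindex)
    then have "x $ inv Q (Q i) = 0" for i
      using indep by (intro independentD[of "range Q" "range Q"]) auto
    then show ?thesis
      using inj by (simp add: vec_eq_iff)
  qed
  then show ?thesis
    by (simp add: linear_inj_iff_eq_0 linear_sum_component_scaleR)
qed

lemma summable_on_lattice_exp_neg_norm:
  fixes Q :: "'n::finite \<Rightarrow> real^'n"
  assumes "inj Q" "independent (range Q)"
  shows "(\<lambda>q. exp (- norm q)) summable_on lattice Q"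
proof -
  define Tr where "Tr x = (\<Sum>i\<in>UNIV. x $ i *\<^sub>R Q i)" for x :: "real^'n"
  have "linear Tr"
    unfolding Tr_def by (rule linear_sum_component_scaleR)
  moreover have "inj Tr"
    unfolding Tr_def using assms by (rule inj_lincomb_of_independent)
  ultimately obtain B where B: "B > 0" "\<And>x. B * norm x \<le> norm (Tr x)"
    using linear_inj_bounded_below_pos by blast
  define T where "T m = Tr (\<chi> i. of_int (m i))" for m :: "'n \<Rightarrow> int"
  have "lattice Q = range T"
    by (auto simp: lattice_def T_def Tr_def)
  have "inj T"
  proof (rule injI)
    fix m m' assume "T m = T m'"
    then have "(\<chi> i. real_of_int (m i)) = (\<chi> i. real_of_int (m' i))"
      using \<open>inj Tr\<close> by (simp add: T_def inj_eq)
    then show "m = m'"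
      by (simp add: vec_eq_iff fun_eq_iff)
  qed
  define N where "N = real CARD('n)"
  have "N > 0"
    by (simp add: N_def)
  have "exp (- norm (T m)) \<le> exp (- (B / N) * (\<Sum>i\<in>UNIV. \<bar>of_int (m i)\<bar>))" for m
  proof -
    have "(\<Sum>i\<in>UNIV. \<bar>of_int (m i)\<bar>) \<le> (\<Sum>i\<in>(UNIV::'n set). norm (\<chi> i. real_of_int (m i)))"
      by (intro sum_mono) (metis component_le_norm_cart vec_lambda_beta)
    also have "\<dots> = N * norm (\<chi> i. real_of_int (m i))"
      by (simp add: N_def)
    finally have "(B / N) * (\<Sum>i\<in>UNIV. \<bar>of_int (m i)\<bar>) \<le> B * norm (\<chi> i. real_of_int (m i))"
      using \<open>N > 0\<close> B(1) by (simp add: field_simps)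
    also have "\<dots> \<le> norm (T m)"
      using B(2) by (simp add: T_def)
    finally show ?thesis
      by simp
  qed
  then have "(\<lambda>m. exp (- norm (T m))) summable_on UNIV"
    by (intro summable_on_comparison_test[OF summable_on_exp_neg_l1_int_vectors[of "B / N"]])
       (use \<open>N > 0\<close> B(1) in auto)
  then show ?thesis
    unfolding \<open>lattice Q = range T\<close> using \<open>inj T\<close>
    by (subst summable_on_reindex) (auto simp: o_def)
qed

lemma summable_on_lattice_gaussian:
  fixes Q :: "'n::finite \<Rightarrow> real^'n" and a b :: real
  assumes "inj Q" "independent (range Q)" "a > 0"
  shows "(\<lambda>q. (1 + norm q) ^ k * exp (- a * (norm q)\<^sup>2 + b * norm q)) summable_on lattice Q"
proof -
  define c where "c = b + real k + 1"
  define C where "C = c\<^sup>2 / (4 * a)"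
  have bound: "(1 + t) ^ k * exp (- a * t\<^sup>2 + b * t) \<le> exp C * exp (- t)" if "t \<ge> 0" for t :: real
  proof -
    have "(1 + t) ^ k \<le> exp t ^ k"
      using that by (intro power_mono) (auto simp: add.commute exp_ge_add_one_self)
    then have "(1 + t) ^ k * exp (- a * t\<^sup>2 + b * t) \<le> exp (real k * t) * exp (- a * t\<^sup>2 + b * t)"
      by (simp add: exp_of_nat_mult[symmetric])
    also have "\<dots> = exp (real k * t - a * t\<^sup>2 + b * t)"
      by (simp add: mult_exp_exp)
    also have "\<dots> \<le> exp (C - t)"
    proof -
      have "0 \<le> a * (t - c / (2 * a))\<^sup>2"
        using \<open>a > 0\<close> by simp
      also have "\<dots> = a * t\<^sup>2 - c * t + C"
        using \<open>a > 0\<close> by (simp add: C_def power2_eq_square field_simps)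
      finally show ?thesis
        by (simp add: c_def algebra_simps)
    qed
    also have "\<dots> = exp C * exp (- t)"
      by (simp add: mult_exp_exp)
    finally show ?thesis .
  qed
  have "(\<lambda>q. exp C * exp (- norm q)) summable_on lattice Q"
    using summable_on_lattice_exp_neg_norm[OF assms(1,2)] by (rule summable_on_cmult_right)
  then show ?thesis
    by (rule summable_on_comparison_test) (rule bound[OF norm_ge_zero], simp)
qed

lemma has_field_derivative_infsum:
  fixes f f' :: "'a \<Rightarrow> complex \<Rightarrow> complex"
  assumes "r > 0"
    and deriv: "\<And>q x. q \<in> S \<Longrightarrow> x \<in> cball z r \<Longrightarrow> (f q has_field_derivative f' q x) (at x)"
    and "M summable_on S"
    and bound: "\<And>q x. q \<in> S \<Longrightarrow> x \<in> cball z r \<Longrightarrow> norm (f q x) \<le> M q"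
  shows "((\<lambda>x. \<Sum>\<^sub>\<infinity>q\<in>S. f q x) has_field_derivative (\<Sum>\<^sub>\<infinity>q\<in>S. f' q z)) (at z)"
    and "(\<lambda>q. f' q z) summable_on S"
proof -
  have partial_sums: "\<forall>\<^sub>F X in finite_subsets_at_top S. continuous_on (cball z r) (\<lambda>x. \<Sum>q\<in>X. f q x) \<and>
      (\<forall>x\<in>ball z r. ((\<lambda>x. \<Sum>q\<in>X. f q x) has_field_derivative (\<Sum>q\<in>X. f' q x)) (at x))"
  proof (rule eventually_finite_subsets_at_top_weakI, intro conjI ballI)
    fix X assume "finite X" "X \<subseteq> S"
    then have sum_deriv: "((\<lambda>x. \<Sum>q\<in>X. f q x) has_field_derivative (\<Sum>q\<in>X. f' q x)) (at x)"
      if "x \<in> cball z r" for x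
      using deriv that by (intro DERIV_sum) auto
    then show "continuous_on (cball z r) (\<lambda>x. \<Sum>q\<in>X. f q x)"
      by (meson DERIV_isCont continuous_at_imp_continuous_on)
    show "((\<lambda>x. \<Sum>q\<in>X. f q x) has_field_derivative (\<Sum>q\<in>X. f' q x)) (at x)" if "x \<in> ball z r" for x
      using sum_deriv that by auto
  qed
  obtain g' where g': "\<And>x. x \<in> ball z r \<Longrightarrow>
      ((\<lambda>x. \<Sum>\<^sub>\<infinity>q\<in>S. f q x) has_field_derivative g' x) (at x) \<and>
      ((\<lambda>X. \<Sum>q\<in>X. f' q x) \<longlongrightarrow> g' x) (finite_subsets_at_top S)"
    using has_complex_derivative_uniform_limit[OF partial_sums
        Weierstrass_m_test_general[OF bound \<open>M summable_on S\<close>] _ \<open>r > 0\<close>]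
    by auto
  have "((\<lambda>q. f' q z) has_sum g' z) S"
    using g'[of z] \<open>r > 0\<close> by (simp add: has_sum_def)
  then show "(\<lambda>q. f' q z) summable_on S"
    and "((\<lambda>x. \<Sum>\<^sub>\<infinity>q\<in>S. f q x) has_field_derivative (\<Sum>\<^sub>\<infinity>q\<in>S. f' q z)) (at z)"
    using g'[of z] \<open>r > 0\<close> by (auto simp: infsumI has_sum_imp_summable)
qed

lemma infsum_sum:
  fixes f :: "'i \<Rightarrow> 'a \<Rightarrow> 'b::{topological_comm_monoid_add, t2_space}"
  assumes "finite I" "\<And>i. i \<in> I \<Longrightarrow> f i summable_on A"
  shows "(\<Sum>\<^sub>\<infinity>x\<in>A. \<Sum>i\<in>I. f i x) = (\<Sum>i\<in>I. \<Sum>\<^sub>\<infinity>x\<in>A. f i x)"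
proof -
  have "((\<lambda>x. \<Sum>i\<in>I. f i x) has_sum (\<Sum>i\<in>I. \<Sum>\<^sub>\<infinity>x\<in>A. f i x)) A"
    using assms by (induction I rule: finite_induct) (auto intro: has_sum_add)
  then show ?thesis
    by (rule infsumI)
qed

definition theta_term :: "real^'n::finite \<Rightarrow> complex \<Rightarrow> complex^'n \<Rightarrow> complex" where
  "theta_term q z w = exp ((complex_of_real pi * complex_of_real ((norm q)\<^sup>2) * z
      + 2 * complex_of_real pi * pairing q w) * \<i>)"

lemma theta_eq_infsum_theta_term: "theta L u v w = (\<Sum>\<^sub>\<infinity>q\<in>L. theta_term q (Complex u v) w)"
  by (simp add: theta_def theta_term_def)

lemma norm_pairing_le: "norm (pairing q w) \<le> norm q * (\<Sum>j\<in>UNIV. norm (w $ j))"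
proof -
  have "norm (pairing q w) \<le> (\<Sum>j\<in>UNIV. norm (complex_of_real (q $ j) * w $ j))"
    unfolding pairing_def by (rule norm_sum)
  also have "\<dots> \<le> (\<Sum>j\<in>UNIV. norm q * norm (w $ j))"
    by (intro sum_mono) (simp add: norm_mult mult_right_mono component_le_norm_cart)
  finally show ?thesis
    by (simp add: sum_distrib_left)
qed

lemma norm_theta_term_le:
  "norm (theta_term q z w) \<le> exp (- pi * Im z * (norm q)\<^sup>2 + 2 * pi * (\<Sum>j\<in>UNIV. norm (w $ j)) * norm q)"
proof -
  have "- Im (pairing q w) \<le> norm q * (\<Sum>j\<in>UNIV. norm (w $ j))"
    using norm_pairing_le[of q w] abs_Im_le_cmod[of "pairing q w"] by linarith
  then have "pi * (- Im (pairing q w)) \<le> pi * (norm q * (\<Sum>j\<in>UNIV. norm (w $ j)))"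
    using pi_ge_zero by (rule mult_left_mono)
  then have "- 2 * pi * Im (pairing q w) \<le> 2 * pi * (\<Sum>j\<in>UNIV. norm (w $ j)) * norm q"
    by (simp add: algebra_simps)
  moreover have "norm (theta_term q z w) = exp (- pi * Im z * (norm q)\<^sup>2 - 2 * pi * Im (pairing q w))"
    by (simp add: theta_term_def norm_exp_eq_Re algebra_simps)
  ultimately show ?thesis
    by simp
qed

lemma has_field_derivative_theta_term_z:
  "((\<lambda>z. theta_term q z w) has_field_derivative
     complex_of_real pi * complex_of_real ((norm q)\<^sup>2) * \<i> * theta_term q z w) (at z)"
  unfolding theta_term_def by (rule derivative_eq_intros refl | simp add: algebra_simps)+

definition vec_upd :: "'a^'n \<Rightarrow> 'n \<Rightarrow> 'a \<Rightarrow> 'a^'n" where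
  "vec_upd w i \<zeta> = (\<chi> j. if j = i then \<zeta> else w $ j)"

lemma vec_upd_same [simp]: "vec_upd w i (w $ i) = w"
  by (simp add: vec_upd_def vec_eq_iff)

lemma partial_w_eq_deriv_vec_upd: "partial_w i G w = deriv (\<lambda>\<zeta>. G (vec_upd w i \<zeta>)) (w $ i)"
  by (simp add: partial_w_def vec_upd_def)

lemma pairing_vec_upd:
  "pairing q (vec_upd w i \<zeta>) = pairing q w + complex_of_real (q $ i) * (\<zeta> - w $ i)"
proof -
  have "pairing q (vec_upd w i \<zeta>) - pairing q w
      = (\<Sum>j\<in>UNIV. complex_of_real (q $ j) * (vec_upd w i \<zeta> $ j - w $ j))"
    by (simp add: pairing_def sum_subtractf right_diff_distrib)
  also have "\<dots> = (\<Sum>j\<in>UNIV. if j = i then complex_of_real (q $ i) * (\<zeta> - w $ i) else 0)"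
    by (rule sum.cong) (auto simp: vec_upd_def)
  finally show ?thesis
    by (simp add: algebra_simps)
qed

lemma sum_norm_vec_upd_le:
  "(\<Sum>j\<in>UNIV. norm (vec_upd w i \<zeta> $ j)) \<le> (\<Sum>j\<in>UNIV. norm (w $ j)) + norm \<zeta>"
proof -
  have "(\<Sum>j\<in>UNIV. norm (vec_upd w i \<zeta> $ j)) \<le> (\<Sum>j\<in>UNIV. norm (w $ j) + (if j = i then norm \<zeta> else 0))"
    by (intro sum_mono) (auto simp: vec_upd_def)
  then show ?thesis
    by (simp add: sum.distrib)
qed

definition w_multiplier :: "real^'n::finite \<Rightarrow> 'n \<Rightarrow> complex" where
  "w_multiplier q i = 2 * complex_of_real pi * complex_of_real (q $ i) * \<i>"

lemma has_field_derivative_theta_term_w: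
  "((\<lambda>\<zeta>. theta_term q z (vec_upd w i \<zeta>)) has_field_derivative
     w_multiplier q i * theta_term q z (vec_upd w i \<zeta>)) (at \<zeta>)"
  unfolding theta_term_def pairing_vec_upd w_multiplier_def
  by (rule derivative_eq_intros refl | simp add: algebra_simps)+

lemma sum_w_multiplier_sq:
  "(\<Sum>i\<in>UNIV. w_multiplier q i ^ 2) = 4 * complex_of_real pi * \<i> * (complex_of_real pi * complex_of_real ((norm q)\<^sup>2) * \<i>)"
proof -
  have "(norm q)\<^sup>2 = (\<Sum>i\<in>UNIV. (q $ i)\<^sup>2)"
    unfolding power2_norm_eq_inner inner_vec_def by (simp add: power2_eq_square)
  then show ?thesis
    by (simp add: w_multiplier_def power_mult_distrib sum_distrib_left power2_eq_square algebra_simps)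
qed

lemma has_field_derivative_theta_z:
  fixes Q :: "'n::finite \<Rightarrow> real^'n"
  assumes "inj Q" "independent (range Q)" "Im z > 0"
  shows "((\<lambda>z. \<Sum>\<^sub>\<infinity>q\<in>lattice Q. theta_term q z w) has_field_derivative
           (\<Sum>\<^sub>\<infinity>q\<in>lattice Q. complex_of_real pi * complex_of_real ((norm q)\<^sup>2) * \<i> * theta_term q z w))
         (at z)"
proof -
  define M where "M q =
      exp (- (pi * Im z / 2) * (norm q)\<^sup>2 + 2 * pi * (\<Sum>j\<in>UNIV. norm (w $ j)) * norm q)" for q :: "real^'n"
  have "M summable_on lattice Q"
    unfolding M_def using summable_on_lattice_gaussian[where k = 0 and a = "pi * Im z / 2", OF assms(1,2)] assms(3)
    by simp
  moreover have "norm (theta_term q x w) \<le> M q" if "x \<in> cball z (Im z / 2)" for q x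
  proof -
    have "Im z / 2 \<le> Im x"
      using that abs_Im_le_cmod[of "z - x"] by (simp add: dist_norm)
    then have "pi * (Im z / 2) * (norm q)\<^sup>2 \<le> pi * Im x * (norm q)\<^sup>2"
      by (intro mult_right_mono mult_left_mono) auto
    then have "exp (- pi * Im x * (norm q)\<^sup>2 + 2 * pi * (\<Sum>j\<in>UNIV. norm (w $ j)) * norm q) \<le> M q"
      by (simp add: M_def)
    then show ?thesis
      using norm_theta_term_le[of q x w] by linarith
  qed
  ultimately show ?thesis
    using assms(3)
    by (intro has_field_derivative_infsum(1)[where r = "Im z / 2", OF _ has_field_derivative_theta_term_z])
       auto
qed

lemma partial_w_infsum_theta_term:
  fixes Q :: "'n::finite \<Rightarrow> real^'n"
  assumes "inj Q" "independent (range Q)" "Im z > 0"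
  shows "partial_w i (\<lambda>w. \<Sum>\<^sub>\<infinity>q\<in>lattice Q. w_multiplier q i ^ k * theta_term q z w) w
           = (\<Sum>\<^sub>\<infinity>q\<in>lattice Q. w_multiplier q i ^ Suc k * theta_term q z w)"
    and "(\<lambda>q. w_multiplier q i ^ Suc k * theta_term q z w) summable_on lattice Q"
proof -
  define \<beta> where "\<beta> = (\<Sum>j\<in>UNIV. norm (w $ j)) + norm (w $ i) + 1"
  define M where "M q = (2 * pi) ^ k *
      ((1 + norm q) ^ k * exp (- (pi * Im z) * (norm q)\<^sup>2 + 2 * pi * \<beta> * norm q))" for q :: "real^'n"
  have summable: "M summable_on lattice Q"
    unfolding M_def using assms by (intro summable_on_cmult_right summable_on_lattice_gaussian) auto
  have bound: "norm (w_multiplier q i ^ k * theta_term q z (vec_upd w i \<zeta>)) \<le> M q"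
    if "\<zeta> \<in> cball (w $ i) 1" for q \<zeta>
  proof -
    have "norm \<zeta> \<le> norm (w $ i) + 1"
      using that norm_triangle_sub[of \<zeta> "w $ i"] by (simp add: dist_norm norm_minus_commute)
    then have "(\<Sum>j\<in>UNIV. norm (vec_upd w i \<zeta> $ j)) \<le> \<beta>"
      using sum_norm_vec_upd_le[of w i \<zeta>] by (simp add: \<beta>_def)
    then have "2 * pi * (\<Sum>j\<in>UNIV. norm (vec_upd w i \<zeta> $ j)) * norm q \<le> 2 * pi * \<beta> * norm q"
      by (intro mult_right_mono mult_left_mono) auto
    then have "exp (- pi * Im z * (norm q)\<^sup>2 + 2 * pi * (\<Sum>j\<in>UNIV. norm (vec_upd w i \<zeta> $ j)) * norm q)
        \<le> exp (- (pi * Im z) * (norm q)\<^sup>2 + 2 * pi * \<beta> * norm q)"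
      by simp
    with norm_theta_term_le have "norm (theta_term q z (vec_upd w i \<zeta>))
        \<le> exp (- (pi * Im z) * (norm q)\<^sup>2 + 2 * pi * \<beta> * norm q)"
      by (rule order_trans)
    moreover have "norm (w_multiplier q i) \<le> 2 * pi * (1 + norm q)"
      using component_le_norm_cart[of q i] by (simp add: w_multiplier_def norm_mult)
    then have "norm (w_multiplier q i) ^ k \<le> (2 * pi * (1 + norm q)) ^ k"
      by (rule power_mono) simp
    then have "norm (w_multiplier q i ^ k) \<le> (2 * pi) ^ k * (1 + norm q) ^ k"
      by (simp add: norm_power power_mult_distrib)
    ultimately have "norm (w_multiplier q i ^ k) * norm (theta_term q z (vec_upd w i \<zeta>))
        \<le> ((2 * pi) ^ k * (1 + norm q) ^ k) * exp (- (pi * Im z) * (norm q)\<^sup>2 + 2 * pi * \<beta> * norm q)"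
      by (intro mult_mono) auto
    then show ?thesis
      by (simp add: M_def norm_mult mult.assoc)
  qed
  have deriv: "((\<lambda>\<zeta>. w_multiplier q i ^ k * theta_term q z (vec_upd w i \<zeta>)) has_field_derivative
      w_multiplier q i ^ Suc k * theta_term q z (vec_upd w i \<zeta>)) (at \<zeta>)" for q \<zeta>
    using DERIV_cmult[OF has_field_derivative_theta_term_w[of q z w i \<zeta>], of "w_multiplier q i ^ k"]
    by (simp add: mult_ac)
  note termwise = has_field_derivative_infsum[where z = "w $ i", OF zero_less_one deriv summable bound]
  from termwise(1) show "partial_w i (\<lambda>w. \<Sum>\<^sub>\<infinity>q\<in>lattice Q. w_multiplier q i ^ k * theta_term q z w) w
      = (\<Sum>\<^sub>\<infinity>q\<in>lattice Q. w_multiplier q i ^ Suc k * theta_term q z w)"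
    by (simp add: partial_w_eq_deriv_vec_upd DERIV_imp_deriv)
  from termwise(2) show "(\<lambda>q. w_multiplier q i ^ Suc k * theta_term q z w) summable_on lattice Q"
    by simp
qed

lemma laplace_w_infsum_theta_term:
  fixes Q :: "'n::finite \<Rightarrow> real^'n"
  assumes "inj Q" "independent (range Q)" "Im z > 0"
  shows "laplace_w (\<lambda>w. \<Sum>\<^sub>\<infinity>q\<in>lattice Q. theta_term q z w) w
           = (\<Sum>\<^sub>\<infinity>q\<in>lattice Q. (\<Sum>i\<in>UNIV. w_multiplier q i ^ 2) * theta_term q z w)"
proof -
  have "partial_w i (\<lambda>w. \<Sum>\<^sub>\<infinity>q\<in>lattice Q. theta_term q z w)
      = (\<lambda>w. \<Sum>\<^sub>\<infinity>q\<in>lattice Q. w_multiplier q i ^ 1 * theta_term q z w)" for i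
    using partial_w_infsum_theta_term(1)[OF assms, of i 0] by (simp add: fun_eq_iff)
  then have "laplace_w (\<lambda>w. \<Sum>\<^sub>\<infinity>q\<in>lattice Q. theta_term q z w) w
      = (\<Sum>i\<in>UNIV. \<Sum>\<^sub>\<infinity>q\<in>lattice Q. w_multiplier q i ^ 2 * theta_term q z w)"
    using partial_w_infsum_theta_term(1)[OF assms, of _ 1] by (simp add: laplace_w_def numeral_2_eq_2)
  also have "\<dots> = (\<Sum>\<^sub>\<infinity>q\<in>lattice Q. \<Sum>i\<in>UNIV. w_multiplier q i ^ 2 * theta_term q z w)"
    using partial_w_infsum_theta_term(2)[OF assms, of _ 1]
    by (intro infsum_sum[symmetric]) (simp_all add: numeral_2_eq_2)
  finally show ?thesis
    by (simp add: sum_distrib_right)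
qed

lemma slice_deriv_theta:
  fixes Q :: "'n::finite \<Rightarrow> real^'n"
  assumes "inj Q" "independent (range Q)" "v > 0"
  shows "slice_deriv (\<lambda>u v. theta (lattice Q) u v w) u v
           = (\<Sum>\<^sub>\<infinity>q\<in>lattice Q. complex_of_real pi * complex_of_real ((norm q)\<^sup>2) * \<i> *
                theta_term q (Complex u v) w)"
proof -
  have "((\<lambda>t. Complex t v) has_vector_derivative 1) (at u)"
    unfolding Complex_eq by (auto intro!: derivative_eq_intros)
  from field_vector_diff_chain_at[OF this has_field_derivative_theta_z[OF assms(1,2)]]
  have "((\<lambda>t. theta (lattice Q) t v w) has_vector_derivative
      (\<Sum>\<^sub>\<infinity>q\<in>lattice Q. complex_of_real pi * complex_of_real ((norm q)\<^sup>2) * \<i> *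
         theta_term q (Complex u v) w)) (at u)"
    using assms(3) by (simp add: o_def theta_eq_infsum_theta_term)
  then show ?thesis
    unfolding slice_deriv_def by (rule vector_derivative_at)
qed

theorem mainTheorem8:
  fixes Q :: "'n::finite \<Rightarrow> real^'n"
  assumes basis: "inj Q" "independent (range Q)"
    and integral: "\<forall>q\<in>lattice Q. \<exists>k::nat. (norm q)\<^sup>2 = real k"
    and v_pos: "v > 0"
  shows "laplace_w (\<lambda>w'. theta (lattice Q) u v w') w
           - 4 * complex_of_real pi * \<i> * slice_deriv (\<lambda>u' v'. theta (lattice Q) u' v' w) u v = 0"
proof -
  have "laplace_w (\<lambda>w'. theta (lattice Q) u v w') w
      = (\<Sum>\<^sub>\<infinity>q\<in>lattice Q. (\<Sum>i\<in>UNIV. w_multiplier q i ^ 2) * theta_term q (Complex u v) w)"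
    using laplace_w_infsum_theta_term[OF basis, of "Complex u v" w] v_pos
    by (simp add: theta_eq_infsum_theta_term)
  also have "\<dots> = 4 * complex_of_real pi * \<i> * (\<Sum>\<^sub>\<infinity>q\<in>lattice Q.
      complex_of_real pi * complex_of_real ((norm q)\<^sup>2) * \<i> * theta_term q (Complex u v) w)"
    by (simp add: sum_w_multiplier_sq infsum_cmult_right' mult.assoc)
  also have "\<dots> = 4 * complex_of_real pi * \<i> * slice_deriv (\<lambda>u' v'. theta (lattice Q) u' v' w) u v"
    using slice_deriv_theta[OF basis v_pos] by simp
  finally show ?thesis
    by simp
qed

end
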